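(* Let $G=(V,E)$ be a grid graph, and let $P_G=\{(x-y,\,x+y): (x,y)\in V\}\subset\mathbb{R}^2$. Then the vertex set of $G$ can be partitioned into vertex-disjoint paths on three vertices if and only if there exists a set of $\frac{2|V|}{3}$ axis-parallel unit squares discriminating $P_G$ (in particular $|V|$ is divisible by $3$).
   Context: A grid graph is a graph whose vertex set is a finite subset of $\mathbb{Z}^2$, two vertices being adjacent iff they are at Euclidean distance $1$. An axis-parallel unit square is a closed square $[x,x+1]\times[y,y+1]\subset\mathbb{R}^2$. A set $S'$ of objects discriminates $P$ if for every $p\in P$ the set $S'_p=\{s\in S': p\in s\}$ is nonempty, and $S'_p\neq S'_q$ for all distinct $p,q\in P$. *)

theory Defs
  imports Complex_Main
begin

definition grid_adj :: "int \<times> int \<Rightarrow> int \<times> int \<Rightarrow> bool" where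
  "grid_adj p q \<longleftrightarrow> (real_of_int (fst p - fst q))^2 + (real_of_int (snd p - snd q))^2 = 1"

definition is_P3 :: "(int \<times> int) set \<Rightarrow> (int \<times> int) set \<Rightarrow> bool" where
  "is_P3 V T \<longleftrightarrow> (\<exists>a b c. a \<noteq> b \<and> b \<noteq> c \<and> a \<noteq> c \<and> T = {a, b, c} \<and> T \<subseteq> V
      \<and> grid_adj a b \<and> grid_adj b c)"

definition P3_partitionable :: "(int \<times> int) set \<Rightarrow> bool" where
  "P3_partitionable V \<longleftrightarrow> (\<exists>\<Pi>. (\<forall>T\<in>\<Pi>. is_P3 V T) \<and> (\<forall>T1\<in>\<Pi>. \<forall>T2\<in>\<Pi>. T1 \<noteq> T2 \<longrightarrow> T1 \<inter> T2 = {}) \<and> \<Union>\<Pi> = V)"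

definition unit_square :: "real \<Rightarrow> real \<Rightarrow> (real \<times> real) set" where
  "unit_square x y = {p. x \<le> fst p \<and> fst p \<le> x + 1 \<and> y \<le> snd p \<and> snd p \<le> y + 1}"

definition is_unit_square :: "(real \<times> real) set \<Rightarrow> bool" where
  "is_unit_square s \<longleftrightarrow> (\<exists>x y. s = unit_square x y)"

definition discriminates :: "'a set set \<Rightarrow> 'a set \<Rightarrow> bool" where
  "discriminates S P \<longleftrightarrow>
     (\<forall>p\<in>P. {s\<in>S. p \<in> s} \<noteq> {}) \<and>
     (\<forall>p\<in>P. \<forall>q\<in>P. p \<noteq> q \<longrightarrow> {s\<in>S. p \<in> s} \<noteq> {s\<in>S. q \<in> s})"

definition rotated_points :: "(int \<times> int) set \<Rightarrow> (real \<times> real) set" where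
  "rotated_points V = (\<lambda>(x, y). (real_of_int (x - y), real_of_int (x + y))) ` V"

end

theory Submission
  imports Defs
begin

text \<open>
  In the rotated coordinates (x - y, x + y) two grid points lie in a common closed unit square
  only if they are equal or adjacent, and grid graphs have no triangles, so every unit square
  contains at most two points of P_G.

  If V is partitioned into paths a - b - c, the unit squares spanned by the edges ab and bc
  discriminate {a, b, c}, which gives 2|V|/3 squares. Conversely, let S discriminate P by sets
  meeting P in at most two points. The points lying in exactly one set (the ends) lie in pairwise
  different sets, and all other points lie in at least two sets; counting incidences gives
  3|S| \<ge> 2|P|. Equality forces every set to meet P in exactly one end and one point lying in exactly
  two sets, and each such point together with the ends of its two sets is a path on three vertices;
  these paths partition P.
\<close>

section \<open>Grid adjacency in rotated coordinates\<close>

definition rotate_point :: "int \<times> int \<Rightarrow> real \<times> real" where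
  "rotate_point p = (real_of_int (fst p - snd p), real_of_int (fst p + snd p))"

lemma rotated_points_eq_image: "rotated_points V = rotate_point ` V"
  unfolding rotated_points_def rotate_point_def by (auto simp: case_prod_beta)

lemma inj_on_rotate_point: "inj_on rotate_point A"
  unfolding inj_on_def rotate_point_def by auto

lemma int_sum_squares_eq_1_iff: "(a::int)\<^sup>2 + b\<^sup>2 = 1 \<longleftrightarrow> \<bar>a\<bar> + \<bar>b\<bar> = 1"
proof (cases "\<bar>a\<bar> \<le> 1 \<and> \<bar>b\<bar> \<le> 1")
  case True
  then have "(a = -1 \<or> a = 0 \<or> a = 1) \<and> (b = -1 \<or> b = 0 \<or> b = 1)"
    by linarith
  then show ?thesis
    by auto
next
  case False
  then have "a\<^sup>2 + b\<^sup>2 \<noteq> 1" "\<bar>a\<bar> + \<bar>b\<bar> \<noteq> 1"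
    using abs_square_le_1[of a] abs_square_le_1[of b] zero_le_power2[of a] zero_le_power2[of b]
    by linarith+
  then show ?thesis
    by simp
qed

lemma grid_adj_iff: "grid_adj p q \<longleftrightarrow> \<bar>fst p - fst q\<bar> + \<bar>snd p - snd q\<bar> = 1"
proof -
  have "grid_adj p q \<longleftrightarrow> (fst p - fst q)\<^sup>2 + (snd p - snd q)\<^sup>2 = 1"
    unfolding grid_adj_def by (simp flip: of_int_diff of_int_power of_int_add)
  then show ?thesis
    using int_sum_squares_eq_1_iff by simp
qed

lemma grid_adj_odd: "grid_adj p q \<Longrightarrow> odd ((fst p + snd p) - (fst q + snd q))"
  unfolding grid_adj_iff by presburger

lemma grid_adj_no_triangle: "grid_adj a b \<Longrightarrow> grid_adj b c \<Longrightarrow> \<not> grid_adj a c"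
proof
  assume "grid_adj a b" "grid_adj b c" "grid_adj a c"
  then have "odd ((fst a + snd a) - (fst b + snd b))" "odd ((fst b + snd b) - (fst c + snd c))"
    "odd ((fst a + snd a) - (fst c + snd c))"
    using grid_adj_odd by blast+
  then show False by presburger
qed

lemma card_le_2_if_pairwise_grid_adj:
  assumes "pairwise grid_adj A"
  shows "card A \<le> 2"
proof (rule ccontr)
  assume "\<not> card A \<le> 2"
  then have "Suc (Suc (Suc 0)) \<le> card A" by simp
  then obtain a b c where "a \<in> A" "b \<in> A" "c \<in> A" "a \<noteq> b" "b \<noteq> c" "a \<noteq> c"
    unfolding card_le_Suc_iff by blast
  then show False
    using assms grid_adj_no_triangle unfolding pairwise_def by metis
qed

lemma grid_adj_if_rotated_in_unit_square:
  assumes "is_unit_square s" "rotate_point p \<in> s" "rotate_point q \<in> s" "p \<noteq> q"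
  shows "grid_adj p q"
proof -
  obtain x y where "s = unit_square x y"
    using assms(1) unfolding is_unit_square_def by blast
  then have "\<bar>real_of_int ((fst p - snd p) - (fst q - snd q))\<bar> \<le> 1"
    "\<bar>real_of_int ((fst p + snd p) - (fst q + snd q))\<bar> \<le> 1"
    using assms(2,3) unfolding unit_square_def rotate_point_def by auto
  then have "\<bar>(fst p - snd p) - (fst q - snd q)\<bar> \<le> 1" "\<bar>(fst p + snd p) - (fst q + snd q)\<bar> \<le> 1"
    by linarith+
  moreover have "fst p \<noteq> fst q \<or> snd p \<noteq> snd q"
    using assms(4) by (auto simp: prod_eq_iff)
  ultimately show ?thesis
    unfolding grid_adj_iff by presburger
qed

lemma of_int_pair_mem_unit_square:
  "(real_of_int x, real_of_int y) \<in> unit_square (real_of_int u) (real_of_int v) \<longleftrightarrow>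
     u \<le> x \<and> x \<le> u + 1 \<and> v \<le> y \<and> y \<le> v + 1"
  unfolding unit_square_def by auto

definition edge_square :: "(int \<times> int) set \<Rightarrow> (real \<times> real) set" where
  "edge_square e = unit_square (Min (fst ` rotate_point ` e)) (Min (snd ` rotate_point ` e))"

lemma edge_square_pair:
  "edge_square {p, q} = unit_square (real_of_int (min (fst p - snd p) (fst q - snd q)))
     (real_of_int (min (fst p + snd p) (fst q + snd q)))"
  unfolding edge_square_def rotate_point_def by (simp add: of_int_min)

lemma rotate_point_mem_edge_square:
  assumes "grid_adj p q"
  shows "rotate_point z \<in> edge_square {p, q} \<longleftrightarrow> z = p \<or> z = q"
proof -
  obtain a b c d x y where pq: "p = (a, b)" "q = (c, d)" "z = (x, y)" by (metis surj_pair)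
  have "(c = a + 1 \<and> d = b) \<or> (c = a - 1 \<and> d = b) \<or> (c = a \<and> d = b + 1) \<or> (c = a \<and> d = b - 1)"
    using assms unfolding grid_adj_iff pq fst_conv snd_conv by arith
  then show ?thesis
    unfolding pq edge_square_pair rotate_point_def fst_conv snd_conv of_int_pair_mem_unit_square
    by (elim disjE; simp; presburger)
qed

lemma vimage_edge_square: "grid_adj p q \<Longrightarrow> rotate_point -` edge_square {p, q} = {p, q}"
  by (simp add: set_eq_iff rotate_point_mem_edge_square)

section \<open>Partitions into paths on three vertices\<close>

definition path3_partition :: "('a \<Rightarrow> 'a \<Rightarrow> bool) \<Rightarrow> 'a set \<Rightarrow> 'a set set \<Rightarrow> bool" where
  "path3_partition E P \<Pi> \<longleftrightarrow> pairwise disjnt \<Pi> \<and> \<Union>\<Pi> = P \<and>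
     (\<forall>T\<in>\<Pi>. \<exists>a b c. a \<noteq> b \<and> b \<noteq> c \<and> a \<noteq> c \<and> T = {a, b, c} \<and> E a b \<and> E b c)"

lemma path3_partitionE:
  assumes "path3_partition E P \<Pi>" "T \<in> \<Pi>"
  obtains a b c where "a \<noteq> b" "b \<noteq> c" "a \<noteq> c" "T = {a, b, c}" "E a b" "E b c"
proof -
  have "\<forall>T\<in>\<Pi>. \<exists>a b c. a \<noteq> b \<and> b \<noteq> c \<and> a \<noteq> c \<and> T = {a, b, c} \<and> E a b \<and> E b c"
    using assms(1) unfolding path3_partition_def by (rule conjunct2[THEN conjunct2])
  from bspec[OF this assms(2)] show thesis
    using that by (elim exE conjE)
qed

lemma is_P3_iff:
  assumes "T \<subseteq> V"
  shows "is_P3 V T \<longleftrightarrow>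
    (\<exists>a b c. a \<noteq> b \<and> b \<noteq> c \<and> a \<noteq> c \<and> T = {a, b, c} \<and> grid_adj a b \<and> grid_adj b c)"
    (is "_ \<longleftrightarrow> (\<exists>a b c. ?path a b c)")
proof
  assume "is_P3 V T"
  then obtain a b c where "?path a b c"
    unfolding is_P3_def by blast
  then show "\<exists>a b c. ?path a b c" by blast
next
  assume "\<exists>a b c. ?path a b c"
  then obtain a b c where "?path a b c" by blast
  then show "is_P3 V T"
    using assms unfolding is_P3_def by blast
qed

lemma P3_partitionable_iff_path3_partition:
  "P3_partitionable V \<longleftrightarrow> (\<exists>\<Pi>. path3_partition grid_adj V \<Pi>)"
proof -
  have "(\<forall>T\<in>\<Pi>. is_P3 V T) \<and> (\<forall>T1\<in>\<Pi>. \<forall>T2\<in>\<Pi>. T1 \<noteq> T2 \<longrightarrow> T1 \<inter> T2 = {}) \<and> \<Union>\<Pi> = V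
      \<longleftrightarrow> path3_partition grid_adj V \<Pi>" for \<Pi>
  proof (cases "\<Union>\<Pi> = V")
    case True
    then have paths: "(\<forall>T\<in>\<Pi>. is_P3 V T) \<longleftrightarrow>
      (\<forall>T\<in>\<Pi>. \<exists>a b c. a \<noteq> b \<and> b \<noteq> c \<and> a \<noteq> c \<and> T = {a, b, c} \<and> grid_adj a b \<and> grid_adj b c)"
      by (intro ball_cong refl is_P3_iff) blast
    have disjoint: "(\<forall>T1\<in>\<Pi>. \<forall>T2\<in>\<Pi>. T1 \<noteq> T2 \<longrightarrow> T1 \<inter> T2 = {}) \<longleftrightarrow> pairwise disjnt \<Pi>"
      unfolding pairwise_def disjnt_def by blast
    show ?thesis
      unfolding path3_partition_def paths disjoint by (simp only: conj_ac)
  qed (simp add: path3_partition_def)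
  then show ?thesis
    unfolding P3_partitionable_def by simp
qed

lemma path3_partition_mono:
  assumes "path3_partition E P \<Pi>" "\<And>a b. a \<noteq> b \<Longrightarrow> E a b \<Longrightarrow> E' a b"
  shows "path3_partition E' P \<Pi>"
  using assms unfolding path3_partition_def by metis

section \<open>Discriminating families\<close>

lemma discriminates_vimage_iff:
  assumes "inj_on g P"
  shows "discriminates ((\<lambda>s. g -` s) ` S) P \<longleftrightarrow> discriminates S (g ` P)"
proof -
  have same: "{t \<in> (\<lambda>s. g -` s) ` S. p \<in> t} = {t \<in> (\<lambda>s. g -` s) ` S. q \<in> t} \<longleftrightarrow>
      {s \<in> S. g p \<in> s} = {s \<in> S. g q \<in> s}" for p q
  proof -
    have "{t \<in> (\<lambda>s. g -` s) ` S. p \<in> t} = {t \<in> (\<lambda>s. g -` s) ` S. q \<in> t} \<longleftrightarrow>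
        (\<forall>s\<in>S. g p \<in> s \<longleftrightarrow> g q \<in> s)"
      by (auto simp: set_eq_iff)
    also have "\<dots> \<longleftrightarrow> {s \<in> S. g p \<in> s} = {s \<in> S. g q \<in> s}"
      by (auto simp: set_eq_iff)
    finally show ?thesis .
  qed
  have nonempty: "{t \<in> (\<lambda>s. g -` s) ` S. p \<in> t} \<noteq> {} \<longleftrightarrow> {s \<in> S. g p \<in> s} \<noteq> {}" for p
    by blast
  have "discriminates S (g ` P) \<longleftrightarrow> (\<forall>p\<in>P. {s \<in> S. g p \<in> s} \<noteq> {}) \<and>
      (\<forall>p\<in>P. \<forall>q\<in>P. p \<noteq> q \<longrightarrow> {s \<in> S. g p \<in> s} \<noteq> {s \<in> S. g q \<in> s})"
    unfolding discriminates_def using inj_on_eq_iff[OF assms] by simp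
  then show ?thesis
    unfolding discriminates_def same nonempty by blast
qed

lemma discriminates_path_edges:
  assumes "a \<noteq> b" "b \<noteq> c" "a \<noteq> c"
  shows "discriminates {{a, b}, {b, c}} {a, b, c}"
proof -
  have ne: "{a, b} \<noteq> {b, c}"
    using assms by (auto simp: doubleton_eq_iff)
  then have sets_at: "{e \<in> {{a, b}, {b, c}}. a \<in> e} = {{a, b}}"
    "{e \<in> {{a, b}, {b, c}}. b \<in> e} = {{a, b}, {b, c}}"
    "{e \<in> {{a, b}, {b, c}}. c \<in> e} = {{b, c}}"
    using assms by auto
  show ?thesis
    unfolding discriminates_def ball_simps(7) ball_simps(5) sets_at
    using assms ne by (simp add: doubleton_eq_iff)
qed

lemma discriminates_UN_disjoint:
  assumes disj: "pairwise disjnt \<Pi>" and discr: "\<And>T. T \<in> \<Pi> \<Longrightarrow> discriminates (F T) T"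
    and sub: "\<And>T e. T \<in> \<Pi> \<Longrightarrow> e \<in> F T \<Longrightarrow> e \<subseteq> T"
  shows "discriminates (\<Union>T\<in>\<Pi>. F T) (\<Union>\<Pi>)"
proof -
  have block: "T' = T" if "T \<in> \<Pi>" "T' \<in> \<Pi>" "z \<in> T" "z \<in> T'" for T T' z
    using disj that unfolding pairwise_def disjnt_def by blast
  have local: "{e \<in> (\<Union>T\<in>\<Pi>. F T). z \<in> e} = {e \<in> F T. z \<in> e}" if T: "T \<in> \<Pi>" "z \<in> T" for T z
  proof -
    have "e \<in> F T" if "T' \<in> \<Pi>" "e \<in> F T'" "z \<in> e" for T' e
      using block[OF T(1) that(1) T(2)] sub[OF that(1,2)] that by blast
    then show ?thesis
      using T(1) by blast
  qed
  show ?thesis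
    unfolding discriminates_def
  proof (intro conjI ballI impI)
    fix z assume "z \<in> \<Union>\<Pi>"
    then obtain T where "T \<in> \<Pi>" "z \<in> T" by blast
    then show "{e \<in> (\<Union>T\<in>\<Pi>. F T). z \<in> e} \<noteq> {}"
      using local discr unfolding discriminates_def by simp
  next
    fix z z' assume "z \<in> \<Union>\<Pi>" "z' \<in> \<Union>\<Pi>" "z \<noteq> z'"
    then obtain T T' where T: "T \<in> \<Pi>" "z \<in> T" "T' \<in> \<Pi>" "z' \<in> T'" by blast
    show "{e \<in> (\<Union>T\<in>\<Pi>. F T). z \<in> e} \<noteq> {e \<in> (\<Union>T\<in>\<Pi>. F T). z' \<in> e}"
    proof (cases "T = T'")
      case True
      then show ?thesis
        using local T discr \<open>z \<noteq> z'\<close> unfolding discriminates_def by simp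
    next
      case False
      obtain e where e: "e \<in> F T" "z \<in> e"
        using T(1,2) discr unfolding discriminates_def by blast
      have "z' \<notin> e"
        using False block[OF T(3,1) T(4)] sub[OF T(1) e(1)] by blast
      moreover have "e \<in> {e \<in> (\<Union>T\<in>\<Pi>. F T). z \<in> e}"
        using T(1) e by blast
      ultimately show ?thesis
        by blast
    qed
  qed
qed

lemma card_UN_disjoint_blocks:
  assumes "finite \<Pi>" "pairwise disjnt \<Pi>" "\<And>T. T \<in> \<Pi> \<Longrightarrow> finite (F T)"
    and "\<And>T e. T \<in> \<Pi> \<Longrightarrow> e \<in> F T \<Longrightarrow> e \<noteq> {} \<and> e \<subseteq> T"
  shows "card (\<Union>T\<in>\<Pi>. F T) = (\<Sum>T\<in>\<Pi>. card (F T))"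
proof (rule card_UN_disjoint[OF assms(1)])
  show "\<forall>T\<in>\<Pi>. finite (F T)"
    using assms(3) by blast
  show "\<forall>T\<in>\<Pi>. \<forall>T'\<in>\<Pi>. T \<noteq> T' \<longrightarrow> F T \<inter> F T' = {}"
  proof (intro ballI impI equals0I)
    fix T T' e assume "T \<in> \<Pi>" "T' \<in> \<Pi>" "T \<noteq> T'" "e \<in> F T \<inter> F T'"
    then have "e \<noteq> {}" "e \<subseteq> T \<inter> T'"
      using assms(4) by blast+
    moreover have "T \<inter> T' = {}"
      using assms(2) \<open>T \<in> \<Pi>\<close> \<open>T' \<in> \<Pi>\<close> \<open>T \<noteq> T'\<close> unfolding pairwise_def disjnt_def by blast
    ultimately show False
      by blast
  qed
qed

lemma path3_partition_edges:
  assumes "path3_partition E P \<Pi>"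
  obtains edges where "\<forall>T\<in>\<Pi>. \<exists>a b c. a \<noteq> b \<and> b \<noteq> c \<and> a \<noteq> c \<and> T = {a, b, c} \<and>
      E a b \<and> E b c \<and> edges T = {{a, b}, {b, c}}"
proof -
  have "\<forall>T\<in>\<Pi>. \<exists>F a b c. a \<noteq> b \<and> b \<noteq> c \<and> a \<noteq> c \<and> T = {a, b, c} \<and>
      E a b \<and> E b c \<and> F = {{a, b}, {b, c}}"
  proof
    fix T assume "T \<in> \<Pi>"
    then obtain a b c where "a \<noteq> b" "b \<noteq> c" "a \<noteq> c" "T = {a, b, c}" "E a b" "E b c"
      by (rule path3_partitionE[OF assms])
    then show "\<exists>F a b c. a \<noteq> b \<and> b \<noteq> c \<and> a \<noteq> c \<and> T = {a, b, c} \<and>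
        E a b \<and> E b c \<and> F = {{a, b}, {b, c}}"
      by (intro exI[of _ "{{a, b}, {b, c}}"] exI[of _ a] exI[of _ b] exI[of _ c]) simp
  qed
  from bchoice[OF this] obtain edges where "\<forall>T\<in>\<Pi>. \<exists>a b c. a \<noteq> b \<and> b \<noteq> c \<and> a \<noteq> c \<and>
      T = {a, b, c} \<and> E a b \<and> E b c \<and> edges T = {{a, b}, {b, c}}" ..
  then show thesis
    by (rule that)
qed

lemma discriminating_edges_of_path3_partition:
  assumes part: "path3_partition E P \<Pi>" and "finite P"
  obtains S where "finite S" "discriminates S P" "3 * card S = 2 * card P"
    "\<forall>e\<in>S. \<exists>a b. a \<noteq> b \<and> e = {a, b} \<and> E a b"
proof -
  obtain edges where edges: "\<forall>T\<in>\<Pi>. \<exists>a b c. a \<noteq> b \<and> b \<noteq> c \<and> a \<noteq> c \<and>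
      T = {a, b, c} \<and> E a b \<and> E b c \<and> edges T = {{a, b}, {b, c}}"
    by (rule path3_partition_edges[OF part])
  have disj: "pairwise disjnt \<Pi>" and union: "\<Union>\<Pi> = P"
    using part unfolding path3_partition_def by blast+
  have fin_\<Pi>: "finite \<Pi>" and fin_T: "\<And>T. T \<in> \<Pi> \<Longrightarrow> finite T"
    using \<open>finite P\<close> union by (auto intro: finite_UnionD finite_subset)
  have edge_in_block: "e \<noteq> {} \<and> e \<subseteq> T" if "T \<in> \<Pi>" "e \<in> edges T" for T e
    using bspec[OF edges that(1)] that(2) by blast
  have card_T: "card T = 3" and card_edges: "card (edges T) = 2"
    and discr: "discriminates (edges T) T" if T: "T \<in> \<Pi>" for T
  proof -
    obtain a b c where abc: "a \<noteq> b" "b \<noteq> c" "a \<noteq> c" "T = {a, b, c}" "edges T = {{a, b}, {b, c}}"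
      using bspec[OF edges T] by blast
    then have "{a, b} \<noteq> {b, c}"
      by (simp add: doubleton_eq_iff)
    then show "card T = 3" "card (edges T) = 2"
      using abc by simp_all
    show "discriminates (edges T) T"
      using discriminates_path_edges[OF abc(1-3)] abc(4,5) by simp
  qed
  have fin_edges: "finite (edges T)" if "T \<in> \<Pi>" for T
    using card_edges[OF that] by (simp add: card_ge_0_finite)
  show thesis
  proof (rule that)
    show "finite (\<Union>T\<in>\<Pi>. edges T)"
      using fin_\<Pi> fin_edges by blast
    show "discriminates (\<Union>T\<in>\<Pi>. edges T) P"
      using discriminates_UN_disjoint[OF disj discr] edge_in_block union by blast
    have "card (\<Union>T\<in>\<Pi>. edges T) = 2 * card \<Pi>"
      using card_UN_disjoint_blocks[OF fin_\<Pi> disj fin_edges edge_in_block] card_edges by simp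
    moreover have "card P = 3 * card \<Pi>"
      using card_Union_disjoint[OF disj fin_T] union card_T by simp
    ultimately show "3 * card (\<Union>T\<in>\<Pi>. edges T) = 2 * card P"
      by simp
    show "\<forall>e\<in>\<Union>T\<in>\<Pi>. edges T. \<exists>a b. a \<noteq> b \<and> e = {a, b} \<and> E a b"
    proof
      fix e assume "e \<in> (\<Union>T\<in>\<Pi>. edges T)"
      then obtain T where "T \<in> \<Pi>" "e \<in> edges T"
        by blast
      moreover obtain a b c where "a \<noteq> b" "b \<noteq> c" "E a b" "E b c" "edges T = {{a, b}, {b, c}}"
        using bspec[OF edges \<open>T \<in> \<Pi>\<close>] by blast
      ultimately show "\<exists>a b. a \<noteq> b \<and> e = {a, b} \<and> E a b"
        by blast
    qed
  qed
qed

section \<open>Discriminating families of extremal size\<close>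

locale tight_discriminating_family =
  fixes S :: "'a set set" and P :: "'a set"
  assumes finite_P: "finite P" and finite_S: "finite S"
    and discriminating: "discriminates S P"
    and card_trace_le_2: "s \<in> S \<Longrightarrow> card (s \<inter> P) \<le> 2"
    and tight: "3 * card S \<le> 2 * card P"
begin

definition sets_at :: "'a \<Rightarrow> 'a set set" where
  "sets_at p = {s \<in> S. p \<in> s}"

definition ends :: "'a set" where
  "ends = {p \<in> P. card (sets_at p) = 1}"

definition end_set :: "'a \<Rightarrow> 'a set" where
  "end_set p = the_elem (sets_at p)"

lemma finite_sets_at: "finite (sets_at p)"
  unfolding sets_at_def using finite_S by simp

lemma sets_at_nonempty: "p \<in> P \<Longrightarrow> sets_at p \<noteq> {}"
  using discriminating unfolding discriminates_def sets_at_def by blast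

lemma sets_at_inj: "p \<in> P \<Longrightarrow> q \<in> P \<Longrightarrow> sets_at p = sets_at q \<Longrightarrow> p = q"
  using discriminating unfolding discriminates_def sets_at_def by blast

lemma ends_subset: "ends \<subseteq> P"
  unfolding ends_def by blast

lemma sets_at_end: "p \<in> ends \<Longrightarrow> sets_at p = {end_set p}"
proof -
  assume "p \<in> ends"
  then have "card (sets_at p) = 1" unfolding ends_def by blast
  then obtain s where "sets_at p = {s}" by (rule card_1_singletonE)
  then show ?thesis unfolding end_set_def by simp
qed

lemma end_set_mem: "p \<in> ends \<Longrightarrow> end_set p \<in> S \<and> p \<in> end_set p"
  using sets_at_end[of p] unfolding sets_at_def by blast

lemma ends_eq_if_same_set:
  assumes "p \<in> ends" "q \<in> ends" "p \<in> s" "q \<in> s" "s \<in> S"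
  shows "p = q"
proof -
  have "s \<in> sets_at p" "s \<in> sets_at q"
    using assms unfolding sets_at_def by blast+
  then have "sets_at p = {s}" "sets_at q = {s}"
    using assms(1,2) by (simp_all add: sets_at_end)
  then show ?thesis
    using sets_at_inj assms(1,2) ends_subset by (metis subsetD)
qed

lemma card_sets_at_ge_2:
  assumes "p \<in> P - ends"
  shows "2 \<le> card (sets_at p)"
proof -
  have "card (sets_at p) \<noteq> 0"
    using assms sets_at_nonempty finite_sets_at by simp
  moreover have "card (sets_at p) \<noteq> 1"
    using assms unfolding ends_def by blast
  ultimately show ?thesis by linarith
qed

lemma inj_on_end_set: "inj_on end_set ends"
proof (rule inj_onI)
  fix p q assume "p \<in> ends" "q \<in> ends" "end_set p = end_set q"
  then have "sets_at p = sets_at q" by (simp add: sets_at_end)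
  then show "p = q" using sets_at_inj ends_subset \<open>p \<in> ends\<close> \<open>q \<in> ends\<close> by blast
qed

lemma end_set_image_subset: "end_set ` ends \<subseteq> S"
  using end_set_mem by blast

lemma card_ends_le: "card ends \<le> card S"
  using card_inj_on_le[OF inj_on_end_set end_set_image_subset finite_S] .

lemma sum_card_sets_at: "(\<Sum>p\<in>P. card (sets_at p)) = (\<Sum>s\<in>S. card (s \<inter> P))"
proof -
  have "(\<Sum>p\<in>P. card (sets_at p)) = (\<Sum>p\<in>P. \<Sum>s\<in>{s \<in> S. p \<in> s}. 1)"
    unfolding sets_at_def by simp
  also have "\<dots> = (\<Sum>s\<in>S. \<Sum>p\<in>{p \<in> P. p \<in> s}. 1)"
    by (rule sum.swap_restrict[OF finite_P finite_S])
  also have "\<dots> = (\<Sum>s\<in>S. card (s \<inter> P))"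
    by (simp add: Int_def conj_commute)
  finally show ?thesis .
qed

lemma tight_counts:
  shows "card ends = card S"
    and "(\<Sum>p\<in>P - ends. card (sets_at p)) = 2 * card (P - ends)"
    and "(\<Sum>s\<in>S. card (s \<inter> P)) = 2 * card S"
proof -
  have "(\<Sum>p\<in>ends. card (sets_at p)) = card ends"
    unfolding ends_def by simp
  then have split: "(\<Sum>p\<in>P. card (sets_at p)) = card ends + (\<Sum>p\<in>P - ends. card (sets_at p))"
    using sum.subset_diff[OF ends_subset finite_P, of "\<lambda>p. card (sets_at p)"] by simp
  have lower: "2 * card (P - ends) \<le> (\<Sum>p\<in>P - ends. card (sets_at p))"
    using sum_mono[of "P - ends" "\<lambda>_. 2::nat" "\<lambda>p. card (sets_at p)"] card_sets_at_ge_2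
    by (simp add: mult.commute)
  have upper: "(\<Sum>s\<in>S. card (s \<inter> P)) \<le> 2 * card S"
    using sum_mono[of S "\<lambda>s. card (s \<inter> P)" "\<lambda>_. 2::nat"] card_trace_le_2
    by (simp add: mult.commute)
  have "card P = card ends + card (P - ends)"
    using card_Diff_subset[OF finite_subset[OF ends_subset finite_P] ends_subset]
      card_mono[OF finite_P ends_subset] by simp
  \<comment> \<open>2|S| \<ge> \<Sum>|s \<inter> P| = \<Sum> deg \<ge> |ends| + 2|P - ends| = 2|P| - |ends| \<ge> 3|S| - |S|\<close>
  then show "card ends = card S"
    and "(\<Sum>p\<in>P - ends. card (sets_at p)) = 2 * card (P - ends)"
    and "(\<Sum>s\<in>S. card (s \<inter> P)) = 2 * card S"
    using split lower upper card_ends_le tight sum_card_sets_at by linarith+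
qed

lemma card_trace_eq_2: "s \<in> S \<Longrightarrow> card (s \<inter> P) = 2"
  using sum_mono_inv[of "\<lambda>s. card (s \<inter> P)" S "\<lambda>_. 2"] tight_counts(3) card_trace_le_2 finite_S
  by (simp add: mult.commute)

lemma card_sets_at_eq_2: "p \<in> P - ends \<Longrightarrow> card (sets_at p) = 2"
  using sum_mono_inv[of "\<lambda>_. 2" "P - ends" "\<lambda>p. card (sets_at p)"] tight_counts(2)
    card_sets_at_ge_2 finite_P
  by (simp add: mult.commute)

lemma end_set_image: "end_set ` ends = S"
  using card_subset_eq[OF finite_S end_set_image_subset] card_image[OF inj_on_end_set] tight_counts(1)
  by simp

lemma trace_eq: 
  assumes "s \<in> S"
  obtains a b where "a \<in> ends" "b \<in> P - ends" "s \<inter> P = {a, b}"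
proof -
  obtain a where a: "a \<in> ends" "s = end_set a"
    using assms end_set_image by blast
  then have "a \<in> s \<inter> P"
    using end_set_mem ends_subset by blast
  moreover obtain x y where xy: "s \<inter> P = {x, y}" "x \<noteq> y"
    using card_trace_eq_2[OF assms] unfolding card_2_iff by blast
  ultimately obtain b where b: "b \<noteq> a" "s \<inter> P = {a, b}"
    by (metis insert_commute insert_iff singletonD)
  have "b \<notin> ends"
    using ends_eq_if_same_set[OF a(1) _ _ _ assms] b by blast
  then show thesis
    using that a(1) b(2) by blast
qed

lemma trace_of_sets_at:
  assumes "b \<in> P - ends" "s \<in> sets_at b"
  obtains a where "a \<in> ends" "s \<inter> P = {a, b}"
proof -
  have s: "s \<in> S" "b \<in> s \<inter> P"
    using assms unfolding sets_at_def by blast+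
  obtain a b' where "a \<in> ends" "b' \<in> P - ends" "s \<inter> P = {a, b'}"
    using trace_eq[OF s(1)] .
  moreover have "b = b'"
    using calculation s(2) assms(1) by auto
  ultimately show thesis
    using that by blast
qed

definition path :: "'a \<Rightarrow> 'a set" where
  "path b = (\<Union>s\<in>sets_at b. s \<inter> P)"

lemma path_subset: "path b \<subseteq> P"
  unfolding path_def by blast

lemma path_is_path3:
  assumes b: "b \<in> P - ends"
  shows "\<exists>a c. a \<noteq> b \<and> b \<noteq> c \<and> a \<noteq> c \<and> path b = {a, b, c} \<and>
    (\<exists>s\<in>S. a \<in> s \<and> b \<in> s) \<and> (\<exists>s\<in>S. b \<in> s \<and> c \<in> s)"
proof -
  obtain s1 s2 where s12: "sets_at b = {s1, s2}" "s1 \<noteq> s2"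
    using card_sets_at_eq_2[OF b] unfolding card_2_iff by blast
  then have in_S: "s1 \<in> S" "s2 \<in> S"
    unfolding sets_at_def by blast+
  obtain a where a: "a \<in> ends" "s1 \<inter> P = {a, b}"
    using trace_of_sets_at[OF b] s12(1) by blast
  obtain c where c: "c \<in> ends" "s2 \<inter> P = {c, b}"
    using trace_of_sets_at[OF b] s12(1) by blast
  have "a \<noteq> c"
  proof
    assume "a = c"
    then have "s1 \<in> sets_at a" "s2 \<in> sets_at a"
      using a(2) c(2) in_S unfolding sets_at_def by blast+
    then show False
      using sets_at_end[OF a(1)] s12(2) by simp
  qed
  moreover have "path b = {a, b, c}"
    unfolding path_def s12(1) using a(2) c(2) by auto
  moreover have "a \<noteq> b" "b \<noteq> c"
    using a(1) c(1) b by blast+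
  moreover have "\<exists>s\<in>S. a \<in> s \<and> b \<in> s" "\<exists>s\<in>S. b \<in> s \<and> c \<in> s"
    using in_S a(2) c(2) by blast+
  ultimately show ?thesis
    by blast
qed

lemma path_disjoint:
  assumes b: "b \<in> P - ends" and b': "b' \<in> P - ends" and z: "z \<in> path b" "z \<in> path b'"
  shows "b = b'"
proof -
  obtain s where s: "s \<in> sets_at b" "z \<in> s \<inter> P"
    using z(1) unfolding path_def by blast
  obtain s' where s': "s' \<in> sets_at b'" "z \<in> s' \<inter> P"
    using z(2) unfolding path_def by blast
  obtain a where a: "a \<in> ends" "s \<inter> P = {a, b}"
    using trace_of_sets_at[OF b s(1)] .
  obtain a' where a': "a' \<in> ends" "s' \<inter> P = {a', b'}"
    using trace_of_sets_at[OF b' s'(1)] .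
  show ?thesis
  proof (cases "z \<in> ends")
    case True
    then have "z = a" "z = a'"
      using s(2) s'(2) a a' b b' by blast+
    then have "s \<in> sets_at z" "s' \<in> sets_at z"
      using s(1) s'(1) s(2) s'(2) unfolding sets_at_def by blast+
    then have "s = s'"
      using sets_at_end[OF True] by simp
    then show ?thesis
      using a(2) a'(2) \<open>z = a\<close> \<open>z = a'\<close> b b' True by (auto simp: doubleton_eq_iff)
  next
    case False
    then show ?thesis
      using s(2) s'(2) a a' by auto
  qed
qed

lemma exists_path_containing:
  assumes "z \<in> P"
  shows "\<exists>b\<in>P - ends. z \<in> path b"
proof (cases "z \<in> ends")
  case True
  obtain a b where ab: "a \<in> ends" "b \<in> P - ends" "end_set z \<inter> P = {a, b}"
    using trace_eq end_set_mem[OF True] by metis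
  then have "b \<in> end_set z" "z \<in> end_set z \<inter> P"
    using end_set_mem[OF True] assms by blast+
  then have "end_set z \<in> sets_at b" "z \<in> end_set z \<inter> P"
    using end_set_mem[OF True] unfolding sets_at_def by blast+
  then show ?thesis
    using ab(2) unfolding path_def by blast
next
  case False
  obtain s where "s \<in> sets_at z"
    using sets_at_nonempty[OF assms] by blast
  then have "z \<in> path z"
    using assms unfolding path_def sets_at_def by blast
  then show ?thesis
    using assms False by blast
qed

theorem path3_partition_by_paths:
  "path3_partition (\<lambda>a b. \<exists>s\<in>S. a \<in> s \<and> b \<in> s) P (path ` (P - ends))"
  unfolding path3_partition_def
proof (intro conjI)
  show "pairwise disjnt (path ` (P - ends))"
    unfolding pairwise_def disjnt_def
  proof (intro ballI impI)
    fix T T' assume "T \<in> path ` (P - ends)" "T' \<in> path ` (P - ends)" "T \<noteq> T'"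
    then show "T \<inter> T' = {}"
      using path_disjoint by blast
  qed
  show "\<Union> (path ` (P - ends)) = P"
    using path_subset exists_path_containing by blast
  show "\<forall>T\<in>path ` (P - ends). \<exists>a b c. a \<noteq> b \<and> b \<noteq> c \<and> a \<noteq> c \<and> T = {a, b, c} \<and>
      (\<exists>s\<in>S. a \<in> s \<and> b \<in> s) \<and> (\<exists>s\<in>S. b \<in> s \<and> c \<in> s)"
  proof
    fix T assume "T \<in> path ` (P - ends)"
    then obtain b where "b \<in> P - ends" "T = path b" by blast
    then show "\<exists>a b c. a \<noteq> b \<and> b \<noteq> c \<and> a \<noteq> c \<and> T = {a, b, c} \<and>
        (\<exists>s\<in>S. a \<in> s \<and> b \<in> s) \<and> (\<exists>s\<in>S. b \<in> s \<and> c \<in> s)"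
      using path_is_path3[of b] by blast
  qed
qed

end

section \<open>Discriminating unit squares\<close>

lemma path3_partition_of_discriminating_squares:
  assumes "finite V" "finite S" "\<forall>s\<in>S. is_unit_square s" "3 * card S \<le> 2 * card V"
    and "discriminates S (rotate_point ` V)"
  shows "\<exists>\<Pi>. path3_partition grid_adj V \<Pi>"
proof -
  define S' where "S' = (\<lambda>s. rotate_point -` s) ` S"
  have shared_adj: "grid_adj a b" if "a \<noteq> b" "\<exists>s\<in>S'. a \<in> s \<and> b \<in> s" for a b
    using that assms(3) grid_adj_if_rotated_in_unit_square unfolding S'_def by blast
  interpret tight_discriminating_family S' V
  proof
    show "finite V" "finite S'"
      using assms(1,2) unfolding S'_def by simp_all
    show "discriminates S' V"
      unfolding S'_def using assms(5) discriminates_vimage_iff inj_on_rotate_point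
      by blast
    show "card (s \<inter> V) \<le> 2" if "s \<in> S'" for s
    proof (intro card_le_2_if_pairwise_grid_adj pairwiseI)
      fix a b assume "a \<in> s \<inter> V" "b \<in> s \<inter> V" "a \<noteq> b"
      then show "grid_adj a b"
        using that shared_adj by blast
    qed
    show "3 * card S' \<le> 2 * card V"
      using card_image_le[OF assms(2), of "\<lambda>s. rotate_point -` s"] assms(4) unfolding S'_def
      by linarith
  qed
  have "path3_partition grid_adj V (path ` (V - ends))"
    by (rule path3_partition_mono[OF path3_partition_by_paths]) (rule shared_adj)
  then show ?thesis ..
qed

lemma discriminating_squares_of_path3_partition:
  assumes "finite V" "path3_partition grid_adj V \<Pi>"
  obtains S where "finite S" "\<forall>s\<in>S. is_unit_square s" "3 * card S = 2 * card V"
    "discriminates S (rotate_point ` V)"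
proof -
  obtain E where E: "finite E" "discriminates E V" "3 * card E = 2 * card V"
    "\<forall>e\<in>E. \<exists>a b. a \<noteq> b \<and> e = {a, b} \<and> grid_adj a b"
    using discriminating_edges_of_path3_partition[OF assms(2,1)] by blast
  have vimage: "rotate_point -` edge_square e = e" if e: "e \<in> E" for e
  proof -
    obtain a b where "e = {a, b}" "grid_adj a b"
      using bspec[OF E(4) e] by (elim exE conjE)
    then show ?thesis
      using vimage_edge_square by simp
  qed
  show thesis
  proof (rule that)
    show "finite (edge_square ` E)"
      using E(1) by simp
    show "\<forall>s\<in>edge_square ` E. is_unit_square s"
      unfolding edge_square_def is_unit_square_def by blast
    have "inj_on edge_square E"
      using vimage by (rule inj_on_inverseI)
    then show "3 * card (edge_square ` E) = 2 * card V"
      using E(3) by (simp add: card_image)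
    have "(\<lambda>s. rotate_point -` s) ` edge_square ` E = E"
      using vimage by (simp add: image_image)
    then show "discriminates (edge_square ` E) (rotate_point ` V)"
      using discriminates_vimage_iff[OF inj_on_rotate_point, where S = "edge_square ` E"] E(2) by simp
  qed
qed

theorem mainTheorem11:
  fixes V :: "(int \<times> int) set"
  assumes "finite V"
  shows "P3_partitionable V \<longleftrightarrow>
    (\<exists>S. finite S \<and> (\<forall>s\<in>S. is_unit_square s) \<and>
         real (card S) = 2 * real (card V) / 3 \<and>
         discriminates S (rotated_points V))"
proof -
  have card_iff: "real (card S) = 2 * real (card V) / 3 \<longleftrightarrow> 3 * card S = 2 * card V"
    for S :: "'a set"
    by linarith
  show ?thesis
    unfolding P3_partitionable_iff_path3_partition rotated_points_eq_image card_iff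
  proof
    assume "\<exists>\<Pi>. path3_partition grid_adj V \<Pi>"
    then obtain \<Pi> where "path3_partition grid_adj V \<Pi>" ..
    then show "\<exists>S. finite S \<and> (\<forall>s\<in>S. is_unit_square s) \<and> 3 * card S = 2 * card V \<and>
        discriminates S (rotate_point ` V)"
      by (rule discriminating_squares_of_path3_partition[OF assms]) blast
  next
    assume "\<exists>S. finite S \<and> (\<forall>s\<in>S. is_unit_square s) \<and> 3 * card S = 2 * card V \<and>
        discriminates S (rotate_point ` V)"
    then show "\<exists>\<Pi>. path3_partition grid_adj V \<Pi>"
      using path3_partition_of_discriminating_squares[OF assms] by auto
  qed
qed

end
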